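(* Let $f:\mathbb{R}^n\to\mathbb{R}$ be bounded below by $f_{\mathrm{low}}$ and continuously differentiable with $\nabla f$ Lipschitz continuous with constant $L_{\nabla f}$. Run the algorithm described in the context, and suppose that (i) at every iteration $k$ the model $m_k$ is fully linear in $B(x_k,\Delta_k)$ with constants $\kappa_{\mathrm{mf}},\kappa_{\mathrm{mg}}>0$ independent of $k$, and $\|H_k\|\le \kappa_H-1$ for some $\kappa_H\ge 1$ independent of $k$; (ii) at every iteration the step satisfies $\|s_k\|\le\Delta_k$ and $m_k(x_k)-m_k(x_k+s_k)\ge \kappa_s\|g_k\|\min\left(\Delta_k,\frac{\|g_k\|}{\|H_k\|+1}\right)$ for some $\kappa_s\in(0,\tfrac12)$. Let $\epsilon>0$. If $\|\nabla f(x_k)\|\ge\epsilon$ for all $k=0,\ldots,K-1$, then $$K\le \frac{\log(\Delta_0/\Delta_{\min}(\epsilon))}{\log(\gamma_{\mathrm{dec}}^{-1})}+\left(1+\frac{\log(\gamma_{\mathrm{inc}})}{\log(\gamma_{\mathrm{dec}}^{-1})}\right)\frac{(1+\kappa_{\mathrm{mg}}\mu_c^{-1})[f(x_0)-f_{\mathrm{low}}]}{\eta_U\kappa_s\epsilon\Delta_{\min}(\epsilon)},$$ where $$\Delta_{\min}(\epsilon):=\min\left(\Delta_0,\ \frac{\gamma_{\mathrm{dec}}\epsilon}{\max\left(\frac{2\kappa_{\mathrm{mf}}}{\kappa_s(1-\eta_S)},\kappa_H,\mu_c\right)+\kappa_{\mathrm{mg}}},\ \frac{\epsilon}{(1+\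kappa_{\mathrm{mg}}\mu_c^{-1})\kappa_H}\right).$$
   Context: Norms are Euclidean (operator 2-norm for matrices); $B(x,\Delta)=\{y:\|y-x\|\le\Delta\}$. A model $m:\mathbb{R}^n\to\mathbb{R}$ is fully linear in $B(x,\Delta)$ with constants $\kappa_{\mathrm{mf}},\kappa_{\mathrm{mg}}>0$ if $|m(y)-f(y)|\le\kappa_{\mathrm{mf}}\Delta^2$ and $\|\nabla m(y)-\nabla f(y)\|\le\kappa_{\mathrm{mg}}\Delta$ for all $y\in B(x,\Delta)$. Algorithm: inputs $x_0\in\mathbb{R}^n$, $\Delta_0>0$, parameters $0<\gamma_{\mathrm{dec}}<1<\gamma_{\mathrm{inc}}$, $0<\eta_U\le\eta_S<1$, $\mu_c>0$. For $k=0,1,2,\ldots$: build a quadratic model $m_k(y)=c_k+g_k^T(y-x_k)+\tfrac12(y-x_k)^TH_k(y-x_k)$ ($H_k$ symmetric); compute a step $s_k$ (approximately minimizing $m_k(x_k+s)$ over $\|s\|\le\Delta_k$); evaluate $f(x_k+s_k)$ and $\rho_k=\frac{f(x_k)-f(x_k+s_k)}{m_k(x_k)-m_k(x_k+s_k)}$. If $\rho_k\ge\eta_S$ and $\|g_k\|\ge\mu_c\Delta_k$ (very successful): $x_{k+1}=x_k+s_k$, $\Delta_{k+1}=\gamma_{\mathrm{inc}}\Delta_k$. Else if $\eta_U\le\rho_k<\eta_S$ and $\|g_k\|\ge\mu_c\Delta_k$ (successful): $x_{k+1}=x_k+s_k$, $\Delta_{k+1}=\Delta_k$. Otherwise (unsuccessful):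 $x_{k+1}=x_k$, $\Delta_{k+1}=\gamma_{\mathrm{dec}}\Delta_k$. *)

theory Defs
  imports "HOL-Analysis.Analysis"
begin

definition qmodel :: "real \<Rightarrow> real^'n \<Rightarrow> real^'n^'n \<Rightarrow> real^'n \<Rightarrow> real^'n \<Rightarrow> real" where
  "qmodel c g H x y = c + g \<bullet> (y - x) + (1/2) * ((y - x) \<bullet> (H *v (y - x)))"

definition fully_linear ::
  "(real^'n \<Rightarrow> real) \<Rightarrow> (real^'n \<Rightarrow> real^'n) \<Rightarrow> (real^'n \<Rightarrow> real) \<Rightarrow> real^'n \<Rightarrow> real \<Rightarrow> real \<Rightarrow> real \<Rightarrow> bool" where
  "fully_linear f gf m x \<Delta> kmf kmg \<longleftrightarrow>
     (\<forall>y \<in> cball x \<Delta>. \<bar>m y - f y\<bar> \<le> kmf * \<Delta>^2 \<and>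
        (\<exists>gm. (m has_derivative (\<lambda>h. gm \<bullet> h)) (at y) \<and> norm (gm - gf y) \<le> kmg * \<Delta>))"

end

theory Submission
  imports Defs
begin

text \<open>While the true gradient stays above \<open>\<epsilon>\<close>, the model gradient is close to it, so every
  iteration whose radius is below \<open>\<epsilon> / (max (2 kmf / (ks (1 - \<eta>S))) kH \<mu>c + kmg)\<close> has a
  Cauchy decrease that dominates the model error and is very successful. Hence the radius never
  falls below \<open>\<Delta>min(\<epsilon>)\<close>, and then every successful iteration decreases \<open>f\<close> by at least
  \<open>\<eta>U ks \<epsilon> \<Delta>min / (1 + kmg / \<mu>c)\<close>, which bounds their number by \<open>f(x\<^sub>0) - flow\<close>. Each
  unsuccessful iteration shrinks the radius by \<open>\<gamma>dec\<close> and each successful one enlarges it by at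
  most \<open>\<gamma>inc\<close>; as the radius stays above \<open>\<Delta>min\<close>, comparing logarithms bounds the number of
  unsuccessful iterations by \<open>log (\<Delta>\<^sub>0 / \<Delta>min) / log (1 / \<gamma>dec)\<close> plus
  \<open>log \<gamma>inc / log (1 / \<gamma>dec)\<close> times the number of successful ones.\<close>

lemma qmodel_has_derivative:
  "(qmodel c g H x has_derivative
      (\<lambda>h. g \<bullet> h + (1/2) * (h \<bullet> (H *v (y - x)) + (y - x) \<bullet> (H *v h)))) (at y)"
  unfolding qmodel_def
  by (auto intro!: derivative_eq_intros bounded_linear.has_derivative[OF matrix_vector_mul_bounded_linear]
           simp: fun_eq_iff)

lemma qmodel_gradient_at_center:
  assumes "(qmodel c g H x has_derivative (\<lambda>h. gm \<bullet> h)) (at x)"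
  shows "gm = g"
proof -
  have "(qmodel c g H x has_derivative (\<lambda>h. g \<bullet> h)) (at x)"
    using qmodel_has_derivative[of c g H x x] by simp
  with assms have "(\<lambda>h. gm \<bullet> h) = (\<lambda>h. g \<bullet> h)"
    by (rule has_derivative_unique)
  then have "(gm - g) \<bullet> (gm - g) = 0"
    by (metis inner_diff_left diff_self)
  then show ?thesis by simp
qed

lemma fully_linear_qmodel_gradient_error:
  assumes "fully_linear f gf (qmodel c g H x) x \<Delta> kmf kmg" "0 \<le> \<Delta>"
  shows "norm (g - gf x) \<le> kmg * \<Delta>"
proof -
  obtain gm where "(qmodel c g H x has_derivative (\<lambda>h. gm \<bullet> h)) (at x)" "norm (gm - gf x) \<le> kmg * \<Delta>"
    using assms unfolding fully_linear_def by fastforce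
  then show ?thesis using qmodel_gradient_at_center by blast
qed

lemma fully_linear_decrease_error:
  assumes "fully_linear f gf m x \<Delta> kmf kmg" "norm s \<le> \<Delta>"
  shows "\<bar>(f x - f (x + s)) - (m x - m (x + s))\<bar> \<le> 2 * kmf * \<Delta>\<^sup>2"
proof -
  have "x \<in> cball x \<Delta>" "x + s \<in> cball x \<Delta>"
    using assms(2) norm_ge_zero[of s] by (auto simp: dist_norm simp del: norm_ge_zero)
  then have "\<bar>m x - f x\<bar> \<le> kmf * \<Delta>\<^sup>2" "\<bar>m (x + s) - f (x + s)\<bar> \<le> kmf * \<Delta>\<^sup>2"
    using assms(1) unfolding fully_linear_def by blast+
  then show ?thesis by linarith
qed

lemma cauchy_decrease_lower_bound:
  fixes gn nH :: real
  assumes "ks * gn * min \<Delta> (gn / (nH + 1)) \<le> dm"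
    and "r \<le> \<Delta>" "kH * r \<le> gn" "nH + 1 \<le> kH" "0 \<le> nH" "0 \<le> ks" "0 \<le> r"
  shows "ks * gn * r \<le> dm"
proof -
  have "(nH + 1) * r \<le> gn"
    using assms(3-7) by (smt (verit) mult_right_mono)
  then have "r \<le> min \<Delta> (gn / (nH + 1))"
    using assms(2,5) by (simp add: field_simps)
  moreover have "0 \<le> ks * gn"
    using assms(3-7) by (smt (verit) mult_nonneg_nonneg)
  ultimately show ?thesis
    using assms(1) by (smt (verit) mult_left_mono)
qed

lemma model_gradient_lower_bound:
  fixes g gx :: "'a::real_normed_vector"
  assumes "norm (g - gx) \<le> kmg * \<Delta>" "\<mu>c * \<Delta> \<le> norm g" "\<epsilon> \<le> norm gx" "0 < \<mu>c" "0 \<le> kmg"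
  shows "\<epsilon> / (1 + kmg / \<mu>c) \<le> norm g"
proof -
  have "norm gx \<le> norm g + norm (g - gx)"
    by (metis add.commute norm_triangle_sub norm_minus_commute)
  also have "\<dots> \<le> norm g + kmg * (norm g / \<mu>c)"
    using assms(1,2,4,5) by (smt (verit) mult_left_mono pos_le_divide_eq mult.commute)
  finally have "\<epsilon> \<le> norm g * (1 + kmg / \<mu>c)"
    using assms(3) by (simp add: algebra_simps)
  moreover have "0 < 1 + kmg / \<mu>c"
    using assms(4,5) by (simp add: add_pos_nonneg)
  ultimately show ?thesis
    by (simp add: divide_le_eq)
qed

lemma model_gradient_ge_of_small_radius:
  fixes g gx :: "'a::real_normed_vector"
  assumes "norm (g - gx) \<le> kmg * \<Delta>" "\<Delta> \<le> \<epsilon> / (C + kmg)" "\<epsilon> \<le> norm gx" "0 < C + kmg"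
  shows "C * \<Delta> \<le> norm g"
proof -
  have "norm gx \<le> norm g + norm (g - gx)"
    by (metis norm_triangle_sub norm_minus_commute)
  moreover have "(C + kmg) * \<Delta> \<le> \<epsilon>"
    using assms(2,4) by (simp add: pos_le_divide_eq mult.commute)
  ultimately show ?thesis
    using assms(1,3) by (simp add: algebra_simps)
qed

lemma decrease_ratio_ge:
  fixes df dm :: real
  assumes "0 < dm" "\<bar>df - dm\<bar> \<le> e" "e \<le> (1 - \<eta>) * dm"
  shows "\<eta> \<le> df / dm"
proof -
  have "\<eta> * dm \<le> df"
    using assms(2,3) by (simp add: algebra_simps)
  with assms(1) show ?thesis
    by (simp add: pos_le_divide_eq)
qed

lemma very_successful_if_radius_small:
  fixes f :: "real^'n \<Rightarrow> real" and c :: real and g x s :: "real^'n" and H :: "real^'n^'n"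
  defines "m \<equiv> qmodel c g H x"
  assumes fl: "fully_linear f gf m x \<Delta> kmf kmg"
    and \<Delta>_pos: "0 < \<Delta>" and step_len: "norm s \<le> \<Delta>"
    and cauchy: "ks * norm g * min \<Delta> (norm g / (onorm (\<lambda>v. H *v v) + 1)) \<le> m x - m (x + s)"
    and kH: "onorm (\<lambda>v. H *v v) + 1 \<le> kH" and ks: "0 < ks" and \<eta>S: "\<eta>S < 1" and kmg: "0 \<le> kmg"
    and grad: "\<epsilon> \<le> norm (gf x)"
    and small: "\<Delta> \<le> \<epsilon> / (max (2 * kmf / (ks * (1 - \<eta>S))) (max kH \<mu>c) + kmg)"
  shows "\<eta>S \<le> (f x - f (x + s)) / (m x - m (x + s))" and "\<mu>c * \<Delta> \<le> norm g"
proof -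
  define C where "C = max (2 * kmf / (ks * (1 - \<eta>S))) (max kH \<mu>c)"
  have nH: "0 \<le> onorm (\<lambda>v. H *v v)"
    by (rule onorm_pos_le[OF matrix_vector_mul_bounded_linear])
  have err: "norm (g - gf x) \<le> kmg * \<Delta>"
    using fl \<Delta>_pos unfolding m_def by (simp add: fully_linear_qmodel_gradient_error)
  have "0 < C + kmg"
    using kH nH kmg unfolding C_def by linarith
  then have "C * \<Delta> \<le> norm g"
    by (rule model_gradient_ge_of_small_radius[OF err small[folded C_def] grad])
  then have g_ge: "c' * \<Delta> \<le> norm g" if "c' \<le> C" for c'
    using mult_right_mono[OF that] \<Delta>_pos by (meson less_imp_le order_trans)
  have g_kH: "kH * \<Delta> \<le> norm g"
    by (rule g_ge) (simp add: C_def)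
  have g_kmf: "2 * kmf / (ks * (1 - \<eta>S)) * \<Delta> \<le> norm g"
    by (rule g_ge) (simp add: C_def)
  have dm_ge: "ks * norm g * \<Delta> \<le> m x - m (x + s)"
    using cauchy_decrease_lower_bound[OF cauchy order_refl g_kH kH nH] ks \<Delta>_pos by simp
  have "\<Delta> \<le> kH * \<Delta>"
    using kH nH \<Delta>_pos by simp
  then have "0 < norm g"
    using g_kH \<Delta>_pos by linarith
  then have "0 < ks * norm g * \<Delta>"
    using ks \<Delta>_pos by simp
  with dm_ge have dm_pos: "0 < m x - m (x + s)" by linarith
  have "2 * kmf * \<Delta> = (1 - \<eta>S) * ks * (2 * kmf / (ks * (1 - \<eta>S)) * \<Delta>)"
    using ks \<eta>S by (simp add: field_simps)
  also have "\<dots> \<le> (1 - \<eta>S) * ks * norm g"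
    using g_kmf ks \<eta>S by (intro mult_left_mono) auto
  finally have "2 * kmf * \<Delta>\<^sup>2 \<le> (1 - \<eta>S) * (ks * norm g * \<Delta>)"
    using mult_right_mono[OF _ less_imp_le[OF \<Delta>_pos]] by (fastforce simp: power2_eq_square mult_ac)
  also have "\<dots> \<le> (1 - \<eta>S) * (m x - m (x + s))"
    using dm_ge \<eta>S by (simp add: mult_left_mono)
  finally show "\<eta>S \<le> (f x - f (x + s)) / (m x - m (x + s))"
    using decrease_ratio_ge[OF dm_pos fully_linear_decrease_error[OF fl step_len]] by blast
  show "\<mu>c * \<Delta> \<le> norm g"
    by (rule g_ge) (simp add: C_def)
qed

lemma successful_step_decrease:
  fixes f :: "real^'n \<Rightarrow> real" and c :: real and g x s :: "real^'n" and H :: "real^'n^'n"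
  defines "m \<equiv> qmodel c g H x"
  assumes fl: "fully_linear f gf m x \<Delta> kmf kmg" "0 \<le> \<Delta>"
    and cauchy: "ks * norm g * min \<Delta> (norm g / (onorm (\<lambda>v. H *v v) + 1)) \<le> m x - m (x + s)"
    and kH: "onorm (\<lambda>v. H *v v) + 1 \<le> kH"
    and accepted: "\<eta>U \<le> (f x - f (x + s)) / (m x - m (x + s))" "\<mu>c * \<Delta> \<le> norm g"
    and grad: "\<epsilon> \<le> norm (gf x)"
    and \<Delta>min: "0 < \<Delta>min" "\<Delta>min \<le> \<Delta>" "\<Delta>min \<le> \<epsilon> / ((1 + kmg / \<mu>c) * kH)"
    and pos: "0 < ks" "0 < \<eta>U" "0 < \<mu>c" "0 \<le> kmg"
  shows "\<eta>U * ks * \<epsilon> * \<Delta>min / (1 + kmg / \<mu>c) \<le> f x - f (x + s)"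
proof -
  define \<epsilon>g where "\<epsilon>g = \<epsilon> / (1 + kmg / \<mu>c)"
  have scale_pos: "0 < 1 + kmg / \<mu>c"
    using pos by (simp add: add_pos_nonneg)
  have nH: "0 \<le> onorm (\<lambda>v. H *v v)"
    by (rule onorm_pos_le[OF matrix_vector_mul_bounded_linear])
  have "norm (g - gf x) \<le> kmg * \<Delta>"
    using fl unfolding m_def by (rule fully_linear_qmodel_gradient_error)
  then have g_ge: "\<epsilon>g \<le> norm g"
    unfolding \<epsilon>g_def using accepted(2) grad pos(3,4) by (rule model_gradient_lower_bound)
  have kH_pos: "0 < kH"
    using kH nH by linarith
  have kH_\<Delta>min: "kH * \<Delta>min \<le> \<epsilon>g"
    using \<Delta>min(3) scale_pos kH_pos unfolding \<epsilon>g_def by (simp add: pos_le_divide_eq mult_ac)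
  moreover have "\<Delta>min \<le> kH * \<Delta>min"
    using kH nH \<Delta>min(1) by simp
  ultimately have "0 < \<epsilon>g"
    using \<Delta>min(1) by linarith
  then have "0 < ks * \<epsilon>g * \<Delta>min"
    using pos(1) \<Delta>min(1) by simp
  have "ks * \<epsilon>g * \<Delta>min \<le> ks * norm g * \<Delta>min"
    using g_ge \<Delta>min pos by (simp add: mult_left_mono mult_right_mono)
  also have "\<dots> \<le> m x - m (x + s)"
    using cauchy_decrease_lower_bound[OF cauchy \<Delta>min(2) _ kH nH] kH_\<Delta>min g_ge \<Delta>min(1) pos(1)
    by simp
  finally have dm_ge: "ks * \<epsilon>g * \<Delta>min \<le> m x - m (x + s)" .
  with \<open>0 < ks * \<epsilon>g * \<Delta>min\<close> have "0 < m x - m (x + s)" by linarith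
  then have "\<eta>U * (m x - m (x + s)) \<le> f x - f (x + s)"
    using accepted(1) by (simp add: pos_le_divide_eq mult.commute)
  moreover have "\<eta>U * (ks * \<epsilon>g * \<Delta>min) \<le> \<eta>U * (m x - m (x + s))"
    using dm_ge pos by simp
  ultimately show ?thesis
    unfolding \<epsilon>g_def by (simp add: mult_ac)
qed

lemma radius_lower_bound:
  fixes \<Delta> :: "nat \<Rightarrow> real"
  assumes grow: "\<And>k. k < K \<Longrightarrow> \<Delta> k \<le> r \<Longrightarrow> \<Delta> k \<le> \<Delta> (Suc k)"
    and shrink: "\<And>k. k < K \<Longrightarrow> \<gamma> * \<Delta> k \<le> \<Delta> (Suc k)"
    and "0 \<le> \<gamma>" "\<Delta>min \<le> \<Delta> 0" "\<Delta>min \<le> \<gamma> * r" "k \<le> K"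
  shows "\<Delta>min \<le> \<Delta> k"
  using \<open>k \<le> K\<close>
proof (induction k)
  case (Suc k)
  show ?case
  proof (cases "\<Delta> k \<le> r")
    case True
    then show ?thesis using Suc grow[of k] by auto
  next
    case False
    then have "\<gamma> * r \<le> \<gamma> * \<Delta> k"
      using \<open>0 \<le> \<gamma>\<close> by (simp add: mult_left_mono)
    then show ?thesis using Suc shrink[of k] assms(5) by auto
  qed
qed (simp add: assms)

lemma card_filter_lessThan_Suc:
  "card {k. k < Suc n \<and> P k} = card {k. k < n \<and> P k} + (if P n then 1 else 0)"
proof -
  have "{k. k < Suc n \<and> P k} = (if P n then insert n {k. k < n \<and> P k} else {k. k < n \<and> P k})"
    by (auto simp: less_Suc_eq)
  then show ?thesis by simp
qed

lemma card_filter_lessThan_add_not: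
  "card {k. k < n \<and> P k} + card {k. k < n \<and> \<not> P k} = n"
  by (induction n) (simp_all add: card_filter_lessThan_Suc)

lemma card_sufficient_decrease_steps_le:
  fixes \<phi> :: "nat \<Rightarrow> real"
  assumes "0 < \<delta>"
    and decrease: "\<And>k. k < K \<Longrightarrow> P k \<Longrightarrow> \<phi> (Suc k) \<le> \<phi> k - \<delta>"
    and monotone: "\<And>k. k < K \<Longrightarrow> \<phi> (Suc k) \<le> \<phi> k"
    and "\<phi>low \<le> \<phi> K"
  shows "real (card {k. k < K \<and> P k}) \<le> (\<phi> 0 - \<phi>low) / \<delta>"
proof -
  have "\<phi> j \<le> \<phi> 0 - \<delta> * card {k. k < j \<and> P k}" if "j \<le> K" for j
    using that
  proof (induction j)
    case (Suc j)
    then show ?case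
      using decrease[of j] monotone[of j] by (auto simp: card_filter_lessThan_Suc algebra_simps)
  qed simp
  from this[of K] show ?thesis
    using assms(1,4) by (simp add: pos_le_divide_eq mult.commute)
qed

lemma card_contraction_steps_le:
  fixes \<Delta> :: "nat \<Rightarrow> real"
  assumes "0 < \<gamma>dec" "\<gamma>dec < 1" "0 < \<gamma>inc" "0 < \<Delta>min" "\<Delta>min \<le> \<Delta> K"
    and expand: "\<And>k. k < K \<Longrightarrow> P k \<Longrightarrow> \<Delta> (Suc k) \<le> \<gamma>inc * \<Delta> k"
    and contract: "\<And>k. k < K \<Longrightarrow> \<not> P k \<Longrightarrow> \<Delta> (Suc k) \<le> \<gamma>dec * \<Delta> k"
  shows "real (card {k. k < K \<and> \<not> P k})
           \<le> (ln (\<Delta> 0 / \<Delta>min) + card {k. k < K \<and> P k} * ln \<gamma>inc) / ln (1 / \<gamma>dec)"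
proof -
  define S where "S = card {k. k < K \<and> P k}"
  define U where "U = card {k. k < K \<and> \<not> P k}"
  have "\<Delta> j \<le> \<Delta> 0 * \<gamma>inc ^ card {k. k < j \<and> P k} * \<gamma>dec ^ card {k. k < j \<and> \<not> P k}"
    if "j \<le> K" for j
    using that
  proof (induction j)
    case (Suc j)
    then show ?case
      using expand[of j] contract[of j] assms(1,3)
      by (cases "P j") (auto simp: card_filter_lessThan_Suc mult_ac intro: order_trans mult_left_mono)
  qed simp
  then have "\<Delta>min \<le> \<Delta> 0 * \<gamma>inc ^ S * \<gamma>dec ^ U"
    using assms(5) unfolding S_def U_def by (meson order_trans order_refl)
  moreover have "0 < \<Delta> 0"
    using calculation assms(1,3,4) by (smt (verit) zero_less_mult_iff zero_less_power)
  ultimately have "ln \<Delta>min \<le> ln (\<Delta> 0 * \<gamma>inc ^ S * \<gamma>dec ^ U)"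
    using assms(4) by simp
  also have "\<dots> = ln (\<Delta> 0) + S * ln \<gamma>inc + U * ln \<gamma>dec"
    using \<open>0 < \<Delta> 0\<close> assms(1,3) by (simp add: ln_mult ln_realpow)
  finally have "ln \<Delta>min \<le> ln (\<Delta> 0) + S * ln \<gamma>inc + U * ln \<gamma>dec" .
  then have "U * ln (1 / \<gamma>dec) \<le> ln (\<Delta> 0 / \<Delta>min) + S * ln \<gamma>inc"
    using assms(1,4) \<open>0 < \<Delta> 0\<close> by (simp add: ln_div)
  moreover have "0 < ln (1 / \<gamma>dec)"
    using assms(1,2) by simp
  ultimately show ?thesis
    unfolding S_def U_def by (simp add: pos_le_divide_eq)
qed

lemma iteration_count_le:
  fixes \<phi> \<Delta> :: "nat \<Rightarrow> real"
  assumes "0 < \<gamma>dec" "\<gamma>dec < 1" "1 \<le> \<gamma>inc" "0 < \<Delta>min" "\<Delta>min \<le> \<Delta> K"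
    and "0 < \<delta>" "\<phi>low \<le> \<phi> K"
    and accepted: "\<And>k. k < K \<Longrightarrow> P k \<Longrightarrow> \<Delta> (Suc k) \<le> \<gamma>inc * \<Delta> k \<and> \<phi> (Suc k) \<le> \<phi> k - \<delta>"
    and rejected: "\<And>k. k < K \<Longrightarrow> \<not> P k \<Longrightarrow> \<Delta> (Suc k) \<le> \<gamma>dec * \<Delta> k \<and> \<phi> (Suc k) \<le> \<phi> k"
  shows "real K \<le> ln (\<Delta> 0 / \<Delta>min) / ln (1 / \<gamma>dec)
                   + (1 + ln \<gamma>inc / ln (1 / \<gamma>dec)) * ((\<phi> 0 - \<phi>low) / \<delta>)"
proof -
  define S where "S = card {k. k < K \<and> P k}"
  define U where "U = card {k. k < K \<and> \<not> P k}"
  define lg where "lg = ln (1 / \<gamma>dec)"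
  have S_le: "S \<le> (\<phi> 0 - \<phi>low) / \<delta>"
    unfolding S_def
  proof (rule card_sufficient_decrease_steps_le)
    show "\<phi> (Suc k) \<le> \<phi> k" if "k < K" for k
      using that accepted[of k] rejected[of k] assms(6) by (cases "P k") auto
  qed (use assms accepted in auto)
  have "U \<le> (ln (\<Delta> 0 / \<Delta>min) + S * ln \<gamma>inc) / lg"
    unfolding S_def U_def lg_def
    by (rule card_contraction_steps_le) (use assms accepted rejected in auto)
  moreover have "0 < lg" "0 \<le> ln \<gamma>inc"
    unfolding lg_def using assms(1-3) by simp_all
  ultimately have "real K \<le> ln (\<Delta> 0 / \<Delta>min) / lg + (1 + ln \<gamma>inc / lg) * S"
    using card_filter_lessThan_add_not[of K P]
    unfolding S_def U_def by (simp add: add_divide_distrib algebra_simps)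
  also have "\<dots> \<le> ln (\<Delta> 0 / \<Delta>min) / lg + (1 + ln \<gamma>inc / lg) * ((\<phi> 0 - \<phi>low) / \<delta>)"
    using S_le \<open>0 < lg\<close> \<open>0 \<le> ln \<gamma>inc\<close> by (intro add_left_mono mult_left_mono) auto
  finally show ?thesis
    unfolding lg_def .
qed

theorem theorem4p7:
  fixes f :: "real^'n \<Rightarrow> real" and gf :: "real^'n \<Rightarrow> real^'n"
    and flow Lg :: real
    and x :: "nat \<Rightarrow> real^'n" and \<Delta> :: "nat \<Rightarrow> real"
    and c :: "nat \<Rightarrow> real" and g :: "nat \<Rightarrow> real^'n" and H :: "nat \<Rightarrow> real^'n^'n"
    and s :: "nat \<Rightarrow> real^'n"
    and \<gamma>dec \<gamma>inc \<eta>U \<eta>S \<mu>c kmf kmg kH ks \<epsilon> :: real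
    and K :: nat
  assumes f_low: "\<forall>y. flow \<le> f y"
    and f_grad: "\<forall>y. (f has_derivative (\<lambda>h. gf y \<bullet> h)) (at y)"
    and gf_cont: "continuous_on UNIV gf"
    and gf_lip: "\<forall>y z. norm (gf y - gf z) \<le> Lg * norm (y - z)"
    and Delta0: "\<Delta> 0 > 0"
    and params: "0 < \<gamma>dec" "\<gamma>dec < 1" "1 < \<gamma>inc" "0 < \<eta>U" "\<eta>U \<le> \<eta>S" "\<eta>S < 1" "\<mu>c > 0"
    and H_sym: "\<forall>k. transpose (H k) = H k"
    and fl: "\<forall>k. fully_linear f gf (qmodel (c k) (g k) (H k) (x k)) (x k) (\<Delta> k) kmf kmg"
    and kpos: "kmf > 0" "kmg > 0"
    and kH: "kH \<ge> 1" "\<forall>k. onorm (\<lambda>v. H k *v v) \<le> kH - 1"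
    and ks: "0 < ks" "ks < 1/2"
    and step_len: "\<forall>k. norm (s k) \<le> \<Delta> k"
    and step_dec: "\<forall>k. qmodel (c k) (g k) (H k) (x k) (x k) - qmodel (c k) (g k) (H k) (x k) (x k + s k)
                       \<ge> ks * norm (g k) * min (\<Delta> k) (norm (g k) / (onorm (\<lambda>v. H k *v v) + 1))"
    and update: "\<forall>k. let m = qmodel (c k) (g k) (H k) (x k);
                        \<rho> = (f (x k) - f (x k + s k)) / (m (x k) - m (x k + s k)) in
                   (if \<rho> \<ge> \<eta>S \<and> norm (g k) \<ge> \<mu>c * \<Delta> k
                    then x (Suc k) = x k + s k \<and> \<Delta> (Suc k) = \<gamma>inc * \<Delta> k
                    else if \<eta>U \<le> \<rho> \<and> \<rho> < \<eta>S \<and> norm (g k) \<ge> \<mu>c * \<Delta> k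
                    then x (Suc k) = x k + s k \<and> \<Delta> (Suc k) = \<Delta> k
                    else x (Suc k) = x k \<and> \<Delta> (Suc k) = \<gamma>dec * \<Delta> k)"
    and eps: "\<epsilon> > 0"
    and grad_big: "\<forall>k<K. norm (gf (x k)) \<ge> \<epsilon>"
  shows "let \<Delta>min = min (\<Delta> 0) (min
                 (\<gamma>dec * \<epsilon> / (max (2 * kmf / (ks * (1 - \<eta>S))) (max kH \<mu>c) + kmg))
                 (\<epsilon> / ((1 + kmg / \<mu>c) * kH)))
         in real K \<le> ln (\<Delta> 0 / \<Delta>min) / ln (1 / \<gamma>dec)
              + (1 + ln \<gamma>inc / ln (1 / \<gamma>dec))
                * ((1 + kmg / \<mu>c) * (f (x 0) - flow) / (\<eta>U * ks * \<epsilon> * \<Delta>min))"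
proof -
  define C where "C = max (2 * kmf / (ks * (1 - \<eta>S))) (max kH \<mu>c)"
  define \<Delta>min where
    "\<Delta>min = min (\<Delta> 0) (min (\<gamma>dec * \<epsilon> / (C + kmg)) (\<epsilon> / ((1 + kmg / \<mu>c) * kH)))"
  define \<delta> where "\<delta> = \<eta>U * ks * \<epsilon> * \<Delta>min / (1 + kmg / \<mu>c)"
  define m where "m k = qmodel (c k) (g k) (H k) (x k)" for k
  define \<rho> where "\<rho> k = (f (x k) - f (x k + s k)) / (m k (x k) - m k (x k + s k))" for k
  define accepted where "accepted k \<longleftrightarrow> \<eta>U \<le> \<rho> k \<and> \<mu>c * \<Delta> k \<le> norm (g k)" for k
  note update_k = update[rule_format, unfolded Let_def, folded m_def, folded \<rho>_def]
  have \<Delta>_pos: "0 < \<Delta> k" for k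
  proof (induction k)
    case (Suc k)
    then show ?case using update_k[of k] params by (auto split: if_splits)
  qed (rule Delta0)
  have step_accepted: "x (Suc k) = x k + s k \<and> \<Delta> k \<le> \<Delta> (Suc k) \<and> \<Delta> (Suc k) \<le> \<gamma>inc * \<Delta> k"
    if "accepted k" for k
    using that update_k[of k] params \<Delta>_pos[of k] unfolding accepted_def by (auto split: if_splits)
  have step_rejected: "x (Suc k) = x k \<and> \<Delta> (Suc k) = \<gamma>dec * \<Delta> k" if "\<not> accepted k" for k
    using that update_k[of k] params unfolding accepted_def by (auto split: if_splits)
  have nH: "onorm (\<lambda>v. H k *v v) + 1 \<le> kH" for k
    using kH(2)[rule_format, of k] by linarith
  have C_pos: "0 < C + kmg"
    using kH(1) kpos(2) unfolding C_def by linarith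
  have small_radius_grows: "\<Delta> k \<le> \<Delta> (Suc k)" if "k < K" "\<Delta> k \<le> \<epsilon> / (C + kmg)" for k
  proof -
    have "\<eta>S \<le> \<rho> k" "\<mu>c * \<Delta> k \<le> norm (g k)"
      using very_successful_if_radius_small[OF fl[rule_format, of k] \<Delta>_pos step_len[rule_format]
          step_dec[rule_format] nH ks(1) params(6) less_imp_le[OF kpos(2)]
          grad_big[rule_format, OF that(1)] that(2)[unfolded C_def]]
      unfolding \<rho>_def m_def by auto
    then show ?thesis
      using update_k[of k] \<Delta>_pos[of k] params by (auto split: if_splits)
  qed
  have \<Delta>min_pos: "0 < \<Delta>min"
    unfolding \<Delta>min_def using Delta0 params eps C_pos kpos kH(1) by (simp add: add_pos_pos)
  have \<Delta>min_le: "\<Delta>min \<le> \<Delta> k" if "k \<le> K" for k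
  proof (rule radius_lower_bound[where r = "\<epsilon> / (C + kmg)" and \<gamma> = \<gamma>dec])
    show "\<gamma>dec * \<Delta> k \<le> \<Delta> (Suc k)" for k
    proof -
      have "\<gamma>dec * \<Delta> k \<le> \<Delta> k"
        using params(2) \<Delta>_pos[of k] by simp
      then show ?thesis
        using step_accepted[of k] step_rejected[of k] by (cases "accepted k") auto
    qed
  qed (use that small_radius_grows params in \<open>auto simp: \<Delta>min_def\<close>)
  have count: "real K \<le> ln (\<Delta> 0 / \<Delta>min) / ln (1 / \<gamma>dec)
                 + (1 + ln \<gamma>inc / ln (1 / \<gamma>dec)) * ((f (x 0) - flow) / \<delta>)"
  proof (rule iteration_count_le[where P = accepted and \<phi> = "\<lambda>k. f (x k)"])
    show "\<Delta> (Suc k) \<le> \<gamma>inc * \<Delta> k \<and> f (x (Suc k)) \<le> f (x k) - \<delta>" if "k < K" "accepted k" for k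
    proof -
      have "\<delta> \<le> f (x k) - f (x k + s k)"
        unfolding \<delta>_def
        by (rule successful_step_decrease[OF fl[rule_format, of k] _ step_dec[rule_format] nH])
           (use that \<Delta>_pos[of k] grad_big \<Delta>min_pos \<Delta>min_le ks params kpos
             in \<open>auto simp: accepted_def \<rho>_def m_def \<Delta>min_def\<close>)
      with step_accepted[OF that(2)] show ?thesis by auto
    qed
  qed (use step_rejected \<Delta>min_pos \<Delta>min_le f_low params ks eps kpos in \<open>auto simp: \<delta>_def add_pos_pos\<close>)
  moreover have "(f (x 0) - flow) / \<delta> = (1 + kmg / \<mu>c) * (f (x 0) - flow) / (\<eta>U * ks * \<epsilon> * \<Delta>min)"
    unfolding \<delta>_def by simp
  ultimately show ?thesis
    unfolding Let_def C_def[symmetric] \<Delta>min_def[symmetric] by simp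
qed

end
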